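(* Let $q$ be a prime power, $m\ge2$, $1\le k<n$, and let $X\in\mathbb{F}_{q^m}^{k \times (n-k)}$ be chosen uniformly at random. Then $$\Pr\big(\mathrm{rs}[\,I_k\mid X\,] \text{ is a generalized Gabidulin code}\big)\leq \sum_{\substack{0<s<m\\ \gcd(s,m)=1}}\Pr\big(X\in\mathcal G(s)\big) =\sum_{\substack{0<s<m\\ \gcd(s,m)=1}}\frac{|\mathcal G(s)|}{q^{mk(n-k)}} .$$
   Context: For $0<s<m$ with $\gcd(s,m)=1$, $\mathcal G(s):=\{X \in (\mathbb{F}_{q^m}\setminus \mathbb{F}_q)^{k\times (n-k)} \mid \mathrm{rk}(X^{(q^s)}-X)=1\}$, where $X^{(q^s)}$ is obtained by raising each entry of $X$ to the $q^s$-th power. $\mathrm{rs}$ denotes $\mathbb{F}_{q^m}$-row space. For $s$ coprime to $m$ and $g_1,\dots,g_n\in\mathbb{F}_{q^m}$ linearly independent over $\mathbb{F}_q$, the generalized Gabidulin code of dimension $k$ with parameter $s$ is the row space of the $k\times n$ matrix with $(i,j)$ entry $g_j^{q^{s(i-1)}}$; a generalized Gabidulin code is such a code for some such $s$ and $g_1,\dots,g_n$. *)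

theory Defs
  imports "HOL-Probability.Probability"
begin

text \<open>Matrices over a field are represented as functions nat \<Rightarrow> nat \<Rightarrow> 'a,
  zero outside the index range; vectors as functions nat \<Rightarrow> 'a.\<close>

definition mats :: "nat \<Rightarrow> nat \<Rightarrow> (nat \<Rightarrow> nat \<Rightarrow> 'a::zero) set" where
  "mats r c = {A. \<forall>i j. (r \<le> i \<or> c \<le> j) \<longrightarrow> A i j = 0}"

text \<open>The subfield F_q of F_{q^m}: the fixed points of the q-Frobenius.\<close>
definition subfield_q :: "nat \<Rightarrow> 'a::field set" where
  "subfield_q q = {x. x ^ q = x}"

definition rows_indep :: "(nat \<Rightarrow> nat \<Rightarrow> 'a::field) \<Rightarrow> nat \<Rightarrow> nat set \<Rightarrow> bool" where
  "rows_indep A c I = (\<forall>a. (\<forall>j<c. (\<Sum>i\<in>I. a i * A i j) = 0) \<longrightarrow> (\<forall>i\<in>I. a i = 0))"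

definition mat_rank :: "(nat \<Rightarrow> nat \<Rightarrow> 'a::field) \<Rightarrow> nat \<Rightarrow> nat \<Rightarrow> nat" where
  "mat_rank A r c = Max {card I | I. I \<subseteq> {..<r} \<and> rows_indep A c I}"

definition row_space :: "(nat \<Rightarrow> nat \<Rightarrow> 'a::field) \<Rightarrow> nat \<Rightarrow> nat \<Rightarrow> (nat \<Rightarrow> 'a) set" where
  "row_space A r c = {v. \<exists>a. v = (\<lambda>j. if j < c then (\<Sum>i<r. a i * A i j) else 0)}"

definition sys_mat :: "nat \<Rightarrow> nat \<Rightarrow> (nat \<Rightarrow> nat \<Rightarrow> 'a::field) \<Rightarrow> nat \<Rightarrow> nat \<Rightarrow> 'a" where
  "sys_mat k n X = (\<lambda>i j. if i < k \<and> j < n then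
       (if j < k then (if i = j then 1 else 0) else X i (j - k)) else 0)"

definition lin_indep_Fq :: "nat \<Rightarrow> nat \<Rightarrow> (nat \<Rightarrow> 'a::field) \<Rightarrow> bool" where
  "lin_indep_Fq q n g = (\<forall>c. (\<forall>j<n. c j \<in> subfield_q q) \<longrightarrow> (\<Sum>j<n. c j * g j) = 0
       \<longrightarrow> (\<forall>j<n. c j = 0))"

text \<open>Generalized Gabidulin generator matrix (0-indexed rows: entry g_j^(q^(s i))).\<close>
definition gab_mat :: "nat \<Rightarrow> nat \<Rightarrow> nat \<Rightarrow> nat \<Rightarrow> (nat \<Rightarrow> 'a::field) \<Rightarrow> nat \<Rightarrow> nat \<Rightarrow> 'a" where
  "gab_mat q s k n g = (\<lambda>i j. if i < k \<and> j < n then g j ^ (q ^ (s * i)) else 0)"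

definition is_gen_gabidulin :: "nat \<Rightarrow> nat \<Rightarrow> nat \<Rightarrow> nat \<Rightarrow> (nat \<Rightarrow> 'a::field) set \<Rightarrow> bool" where
  "is_gen_gabidulin q m k n C = (\<exists>s g. 0 < s \<and> s < m \<and> coprime s m \<and> lin_indep_Fq q n g
       \<and> C = row_space (gab_mat q s k n g) k n)"

definition G_set :: "nat \<Rightarrow> nat \<Rightarrow> nat \<Rightarrow> nat \<Rightarrow> (nat \<Rightarrow> nat \<Rightarrow> 'a::field) set" where
  "G_set q k l s = {X \<in> mats k l. (\<forall>i<k. \<forall>j<l. X i j \<notin> subfield_q q)
       \<and> mat_rank (\<lambda>i j. X i j ^ (q ^ s) - X i j) k l = 1}"

end

theory Submission
  imports Defs "HOL-Computational_Algebra.Primes" "HOL-Number_Theory.Residues"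
begin

text \<open>If \<open>[I\<^sub>k | X]\<close> generates the Gabidulin code with parameter \<open>s\<close> and evaluation points
  \<open>g\<close>, then row \<open>i\<close> of \<open>[I\<^sub>k | X]\<close> is \<open>(P\<^sub>i (g j))\<^sub>j\<close> for a linearized polynomial
  \<open>P\<^sub>i x = (\<Sum>t<k. a t * \<phi>\<^sup>t x)\<close> in the Frobenius \<open>\<phi> x = x ^ q ^ s\<close>. Since \<open>gcd s m = 1\<close>, the
  fixed field of \<open>\<phi>\<close> is \<open>F\<^sub>q\<close>, and a nonzero such polynomial cannot vanish on \<open>k\<close> elements
  that are linearly independent over \<open>F\<^sub>q\<close> (the Moore matrix is nonsingular). Hence no entry of
  \<open>X\<close> lies in \<open>F\<^sub>q\<close>; and the polynomials \<open>\<phi> \<circ> P\<^sub>i - P\<^sub>i\<close> vanish on \<open>g 0, \<dots>, g (k - 1)\<close>, so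
  they are determined by their top coefficients and their values at the remaining points,
  the rows of \<open>\<phi>(X) - X\<close>, are pairwise proportional. Thus every such \<open>X\<close> lies in some
  \<open>G_set q k (n - k) s\<close>, and the union bound for the uniform distribution gives the claim.\<close>

definition linpoly :: "('a::semiring_0 \<Rightarrow> 'a) \<Rightarrow> (nat \<Rightarrow> 'a) \<Rightarrow> nat \<Rightarrow> 'a \<Rightarrow> 'a" where
  "linpoly \<phi> a d x = (\<Sum>t<d. a t * (\<phi> ^^ t) x)"

definition lin_indep_fixed :: "('a::field \<Rightarrow> 'a) \<Rightarrow> nat \<Rightarrow> (nat \<Rightarrow> 'a) \<Rightarrow> bool" where
  "lin_indep_fixed \<phi> d h \<longleftrightarrow>
     (\<forall>c. (\<forall>j<d. \<phi> (c j) = c j) \<longrightarrow> (\<Sum>j<d. c j * h j) = 0 \<longrightarrow> (\<forall>j<d. c j = 0))"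

lemma lin_indep_fixedD:
  "lin_indep_fixed \<phi> d h \<Longrightarrow> (\<And>j. j < d \<Longrightarrow> \<phi> (c j) = c j) \<Longrightarrow> (\<Sum>j<d. c j * h j) = 0
     \<Longrightarrow> j < d \<Longrightarrow> c j = 0"
  unfolding lin_indep_fixed_def by blast

lemma linpoly_Suc_top_zero: "a d = 0 \<Longrightarrow> linpoly \<phi> a (Suc d) x = linpoly \<phi> a d x"
  by (simp add: linpoly_def)

lemma linpoly_lincomb:
  "linpoly \<phi> (\<lambda>t. u * a t - v * b t) d x = u * linpoly \<phi> a d x - v * linpoly \<phi> b d x"
  for u v :: "'a::comm_ring"
  by (simp add: linpoly_def left_diff_distrib sum_subtractf sum_distrib_left mult.assoc)

lemma sum_tails_eq_0_imp_eq_0: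
  fixes b :: "nat \<Rightarrow> 'a::ab_group_add"
  assumes "\<And>j. j \<le> d \<Longrightarrow> sum b {j..d} = 0" and "t \<le> d"
  shows "b t = 0"
proof -
  have "sum b {t..d} = b t + sum b {Suc t..d}"
    using \<open>t \<le> d\<close> by (simp add: sum.atLeast_Suc_atMost)
  moreover have "sum b {Suc t..d} = 0"
    using assms(1)[of "Suc t"] by (cases "Suc t \<le> d") auto
  ultimately show ?thesis using assms by simp
qed

lemma sum_telescope_tails:
  fixes b f :: "nat \<Rightarrow> 'a::comm_ring"
  shows "(\<Sum>t\<le>d. b t * (f t - f 0)) = (\<Sum>j<d. sum b {Suc j..d} * (f (Suc j) - f j))"
proof (induction d)
  case (Suc d)
  have "(\<Sum>j<Suc d. sum b {Suc j..Suc d} * (f (Suc j) - f j))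
      = (\<Sum>j<Suc d. sum b {Suc j..d} * (f (Suc j) - f j) + b (Suc d) * (f (Suc j) - f j))"
    by (intro sum.cong) (auto simp: distrib_right)
  also have "\<dots> = (\<Sum>j<Suc d. sum b {Suc j..d} * (f (Suc j) - f j)) + b (Suc d) * (f (Suc d) - f 0)"
    by (simp add: sum.distrib flip: sum_distrib_left sum_lessThan_telescope)
  also have "\<dots> = (\<Sum>t\<le>Suc d. b t * (f t - f 0))"
    by (simp add: Suc sum_lessThan_telescope)
  finally show ?case ..
qed simp

locale field_endo =
  fixes \<phi> :: "'a::field \<Rightarrow> 'a"
  assumes add: "\<phi> (x + y) = \<phi> x + \<phi> y"
    and mult: "\<phi> (x * y) = \<phi> x * \<phi> y"
    and one: "\<phi> 1 = 1"
begin

lemma zero [simp]: "\<phi> 0 = 0"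
  using add[of 0 0] by (metis add_0 add_cancel_left_right)

lemma minus: "\<phi> (- x) = - \<phi> x"
  using add[of x "- x"] by (simp add: eq_neg_iff_add_eq_0 add.commute)

lemma diff: "\<phi> (x - y) = \<phi> x - \<phi> y"
  using add[of x "- y"] by (simp add: minus)

lemma sum: "\<phi> (sum f A) = (\<Sum>i\<in>A. \<phi> (f i))"
  by (induction A rule: infinite_finite_induct) (auto simp: add)

lemma eq_0_iff [simp]: "\<phi> x = 0 \<longleftrightarrow> x = 0"
  using mult[of x "inverse x"] one by (cases "x = 0") auto

lemma funpow: "field_endo (\<phi> ^^ t)"
  by unfold_locales (induction t; simp add: add mult one)+

lemma funpow_fixed: "\<phi> c = c \<Longrightarrow> (\<phi> ^^ t) c = c"
  by (induction t) auto

lemma lin_indep_fixed_mono: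
  assumes "lin_indep_fixed \<phi> n h" "d \<le> n"
  shows "lin_indep_fixed \<phi> d h"
  unfolding lin_indep_fixed_def
proof (intro allI impI)
  fix c j assume fixed: "\<forall>j<d. \<phi> (c j) = c j" and sum0: "(\<Sum>j<d. c j * h j) = 0" and "j < d"
  define c' where "c' t = (if t < d then c t else 0)" for t
  have "(\<Sum>t<n. c' t * h t) = (\<Sum>t<d. c t * h t)"
    using \<open>d \<le> n\<close> by (intro sum.mono_neutral_cong_right) (auto simp: c'_def)
  then have "c' j = 0"
    using lin_indep_fixedD[OF assms(1), of c' j] fixed sum0 \<open>j < d\<close> \<open>d \<le> n\<close>
    by (auto simp: c'_def)
  then show "c j = 0" using \<open>j < d\<close> by (simp add: c'_def)
qed

lemma linpoly_diff_fixed_mult: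
  assumes "\<phi> c = c"
  shows "linpoly \<phi> a d (x - c * y) = linpoly \<phi> a d x - c * linpoly \<phi> a d y"
proof -
  have "a t * (\<phi> ^^ t) (x - c * y) = a t * (\<phi> ^^ t) x - c * (a t * (\<phi> ^^ t) y)" for t
    by (simp add: field_endo.diff[OF funpow] field_endo.mult[OF funpow] funpow_fixed[OF assms]
        right_diff_distrib mult_ac)
  then show ?thesis
    by (simp add: linpoly_def sum_subtractf sum_distrib_left)
qed

lemma linpoly_diff_const:
  "linpoly \<phi> b (Suc d) y - (\<Sum>t\<le>d. b t) * y
     = linpoly \<phi> (\<lambda>j. sum b {Suc j..d}) d (\<phi> y - y)"
proof -
  have "linpoly \<phi> b (Suc d) y - (\<Sum>t\<le>d. b t) * y = (\<Sum>t\<le>d. b t * ((\<phi> ^^ t) y - (\<phi> ^^ 0) y))"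
    by (simp add: linpoly_def lessThan_Suc_atMost sum_subtractf sum_distrib_right right_diff_distrib)
  also have "\<dots> = (\<Sum>j<d. sum b {Suc j..d} * ((\<phi> ^^ Suc j) y - (\<phi> ^^ j) y))"
    by (rule sum_telescope_tails)
  also have "\<dots> = linpoly \<phi> (\<lambda>j. sum b {Suc j..d}) d (\<phi> y - y)"
    by (simp add: linpoly_def field_endo.diff[OF funpow] funpow_swap1)
  finally show ?thesis .
qed

lemma lin_indep_fixed_nonzero:
  assumes "lin_indep_fixed \<phi> (Suc d) h"
  shows "h 0 \<noteq> 0"
proof
  assume "h 0 = 0"
  define c :: "nat \<Rightarrow> 'a" where "c j = (if j = 0 then 1 else 0)" for j
  have "(\<Sum>j<Suc d. c j * h j) = 0"
    using \<open>h 0 = 0\<close> by (simp add: c_def sum.lessThan_Suc_shift del: sum.lessThan_Suc)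
  moreover have "\<phi> (c j) = c j" for j by (simp add: c_def one)
  ultimately have "c 0 = 0" using lin_indep_fixedD[OF assms, of c 0] by blast
  then show False by (simp add: c_def)
qed

lemma lin_indep_fixed_divide:
  assumes "lin_indep_fixed \<phi> d h" "w \<noteq> 0"
  shows "lin_indep_fixed \<phi> d (\<lambda>j. h j / w)"
  unfolding lin_indep_fixed_def
proof (intro allI impI)
  fix c j assume "\<forall>j<d. \<phi> (c j) = c j" "(\<Sum>j<d. c j * (h j / w)) = 0" "j < d"
  moreover have "(\<Sum>j<d. c j * (h j / w)) = (\<Sum>j<d. c j * h j) / w"
    by (simp add: sum_divide_distrib)
  ultimately show "c j = 0"
    using lin_indep_fixedD[OF assms(1)] \<open>w \<noteq> 0\<close> by simp
qed

lemma lin_indep_fixed_frob_diff: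
  assumes indep: "lin_indep_fixed \<phi> (Suc d) u" and "u 0 = 1"
  shows "lin_indep_fixed \<phi> d (\<lambda>j. \<phi> (u (Suc j)) - u (Suc j))"
  unfolding lin_indep_fixed_def
proof (intro allI impI)
  fix c j assume fixed: "\<forall>j<d. \<phi> (c j) = c j"
    and sum0: "(\<Sum>j<d. c j * (\<phi> (u (Suc j)) - u (Suc j))) = 0" and "j < d"
  define z where "z = (\<Sum>j<d. c j * u (Suc j))"
  have "\<phi> z = (\<Sum>j<d. c j * \<phi> (u (Suc j)))"
    using fixed by (simp add: z_def sum mult)
  with sum0 have "\<phi> z = z"
    by (simp add: z_def right_diff_distrib sum_subtractf)
  define c' where "c' j = (if j = 0 then - z else c (j - 1))" for j
  have "(\<Sum>j<Suc d. c' j * u j) = 0"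
    using \<open>u 0 = 1\<close> by (simp add: sum.lessThan_Suc_shift c'_def z_def del: sum.lessThan_Suc)
  moreover have "\<phi> (c' i) = c' i" if "i < Suc d" for i
    using that fixed \<open>\<phi> z = z\<close> by (auto simp: c'_def minus)
  ultimately have "c' (Suc j) = 0"
    using lin_indep_fixedD[OF indep, of c'] \<open>j < d\<close> by blast
  then show "c j = 0" by (simp add: c'_def)
qed

text \<open>Induction on \<open>d\<close>: after scaling to \<open>h 0 = 1\<close>
  (coefficients \<open>b t = a t * \<phi>\<^sup>t (h 0)\<close>) the relation at \<open>h 0\<close> says \<open>\<Sum>t. b t = 0\<close>; subtracting
  \<open>(\<Sum>t. b t) * h j\<close> from the others turns them into relations of length \<open>d\<close> at
  \<open>\<phi> (h j) - h j\<close> whose coefficients are the tail sums of \<open>b\<close>.\<close>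

theorem linpoly_vanishing_on_indep_coeffs_eq_0:
  assumes "lin_indep_fixed \<phi> d h" "\<And>j. j < d \<Longrightarrow> linpoly \<phi> a d (h j) = 0" "t < d"
  shows "a t = 0"
  using assms
proof (induction d arbitrary: a h t)
  case (Suc d)
  define w where "w = h 0"
  have "w \<noteq> 0"
    using lin_indep_fixed_nonzero[OF Suc.prems(1)] by (simp add: w_def)
  define u where "u j = h j / w" for j
  have indep_u: "lin_indep_fixed \<phi> (Suc d) u"
    unfolding u_def by (rule lin_indep_fixed_divide[OF Suc.prems(1) \<open>w \<noteq> 0\<close>])
  have "u 0 = 1" using \<open>w \<noteq> 0\<close> by (simp add: u_def w_def)
  define b where "b t = a t * (\<phi> ^^ t) w" for t
  have b_vanish: "linpoly \<phi> b (Suc d) (u j) = 0" if "j < Suc d" for j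
  proof -
    have "h j = w * u j" using \<open>w \<noteq> 0\<close> by (simp add: u_def)
    then have "linpoly \<phi> b (Suc d) (u j) = linpoly \<phi> a (Suc d) (h j)"
      by (simp add: linpoly_def b_def field_endo.mult[OF funpow] mult.assoc)
    with Suc.prems(2)[OF that] show ?thesis by simp
  qed
  have sum_b: "(\<Sum>t\<le>d. b t) = 0"
    using b_vanish[of 0] \<open>u 0 = 1\<close> field_endo.one[OF funpow]
    by (simp add: linpoly_def lessThan_Suc_atMost)
  have tails: "sum b {Suc j..d} = 0" if "j < d" for j
  proof (rule Suc.IH[OF lin_indep_fixed_frob_diff[OF indep_u \<open>u 0 = 1\<close>] _ that])
    fix i assume "i < d"
    then show "linpoly \<phi> (\<lambda>j. sum b {Suc j..d}) d (\<phi> (u (Suc i)) - u (Suc i)) = 0"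
      using linpoly_diff_const[of b d "u (Suc i)"] b_vanish[of "Suc i"] sum_b by simp
  qed
  have "sum b {j..d} = 0" if "j \<le> d" for j
    using sum_b tails[of "j - 1"] that by (cases j) (auto simp: atLeast0AtMost)
  then have "b t = 0"
    using sum_tails_eq_0_imp_eq_0[of d b t] Suc.prems(3) by simp
  then show ?case
    using \<open>w \<noteq> 0\<close> field_endo.eq_0_iff[OF funpow] by (simp add: b_def)
qed simp

lemma frob_linpoly_diff:
  "\<phi> (linpoly \<phi> a d x) - linpoly \<phi> a d x
     = linpoly \<phi> (\<lambda>t. (if 0 < t then \<phi> (a (t - 1)) else 0) - (if t < d then a t else 0)) (Suc d) x"
proof -
  have "\<phi> (linpoly \<phi> a d x) = (\<Sum>t<Suc d. (if 0 < t then \<phi> (a (t - 1)) else 0) * (\<phi> ^^ t) x)"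
    by (simp add: linpoly_def sum mult sum.lessThan_Suc_shift del: sum.lessThan_Suc)
  moreover have "linpoly \<phi> a d x = (\<Sum>t<Suc d. (if t < d then a t else 0) * (\<phi> ^^ t) x)"
    by (simp add: linpoly_def)
  ultimately show ?thesis
    by (simp add: linpoly_def left_diff_distrib sum_subtractf del: sum.lessThan_Suc)
qed

lemma lin_indep_fixed_replace:
  assumes indep: "lin_indep_fixed \<phi> n g"
    and "i < k" "k \<le> i'" "i' < n" "\<phi> c = c"
  shows "lin_indep_fixed \<phi> k (g(i := g i' - c * g i))"
  unfolding lin_indep_fixed_def
proof (intro allI impI)
  fix b t assume fixed: "\<forall>t<k. \<phi> (b t) = b t"
    and sum0: "(\<Sum>t<k. b t * (g(i := g i' - c * g i)) t) = 0" and "t < k"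
  define d where "d t = (if t < k \<and> t \<noteq> i then b t else 0) + (if t = i then - (b i * c) else 0)
    + (if t = i' then b i else 0)" for t
  have "(\<Sum>t<n. d t * g t) = (\<Sum>t\<in>{..<k} - {i}. b t * g t) - b i * c * g i + b i * g i'"
  proof -
    have "(\<Sum>t<n. (if t < k \<and> t \<noteq> i then b t else 0) * g t) = (\<Sum>t\<in>{..<k} - {i}. b t * g t)"
      using \<open>k \<le> i'\<close> \<open>i' < n\<close> by (intro sum.mono_neutral_cong_right) auto
    then show ?thesis
      using \<open>i < k\<close> \<open>k \<le> i'\<close> \<open>i' < n\<close>
      by (simp add: d_def distrib_right sum.distrib if_distrib[of "\<lambda>x. x * _"] sum.delta
          cong: if_cong)
  qed
  also have "\<dots> = (\<Sum>t<k. b t * (g(i := g i' - c * g i)) t)"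
    using \<open>i < k\<close> by (simp add: sum.remove[of "{..<k}" i] algebra_simps)
  finally have "(\<Sum>t<n. d t * g t) = 0" using sum0 by simp
  moreover have "\<phi> (d t) = d t" if "t < n" for t
    using that fixed \<open>i < k\<close> \<open>\<phi> c = c\<close> by (simp add: d_def add minus mult)
  ultimately have d0: "d t = 0" if "t < n" for t
    using lin_indep_fixedD[OF indep, of d t] that by blast
  show "b t = 0"
  proof (cases "t = i")
    case True
    then show ?thesis using d0[of i'] \<open>i < k\<close> \<open>k \<le> i'\<close> \<open>i' < n\<close> by (simp add: d_def)
  next
    case False
    then show ?thesis using d0[of t] \<open>t < k\<close> \<open>k \<le> i'\<close> \<open>i' < n\<close> by (simp add: d_def)
  qed
qed

end

lemma mat_rank_eq_1I:
  fixes M :: "nat \<Rightarrow> nat \<Rightarrow> 'a::field"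
  assumes "i0 < r" "j0 < c" "M i0 j0 \<noteq> 0"
    and dependent: "\<And>i1 i2. i1 < r \<Longrightarrow> i2 < r \<Longrightarrow>
      \<exists>a b. (a \<noteq> 0 \<or> b \<noteq> 0) \<and> (\<forall>j<c. a * M i1 j + b * M i2 j = 0)"
  shows "mat_rank M r c = 1"
proof -
  define S where "S = {card I | I. I \<subseteq> {..<r} \<and> rows_indep M c I}"
  have "card I \<le> Suc 0" if I: "I \<subseteq> {..<r}" "rows_indep M c I" for I
  proof (rule ccontr)
    assume "\<not> card I \<le> Suc 0"
    moreover have "finite I" using I(1) finite_subset by blast
    ultimately obtain i1 i2 where "i1 \<in> I" "i2 \<in> I" "i1 \<noteq> i2"
      using card_le_Suc0_iff_eq by blast
    moreover have "i1 < r" "i2 < r" using I(1) \<open>i1 \<in> I\<close> \<open>i2 \<in> I\<close> by auto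
    then obtain a b where ab: "a \<noteq> 0 \<or> b \<noteq> 0" "\<forall>j<c. a * M i1 j + b * M i2 j = 0"
      using dependent by blast
    define \<alpha> where "\<alpha> i = (if i = i1 then a else if i = i2 then b else 0)" for i
    have "(\<Sum>i\<in>I. \<alpha> i * M i j) = a * M i1 j + b * M i2 j" for j
    proof -
      have "(\<Sum>i\<in>I. \<alpha> i * M i j) = (\<Sum>i\<in>I. (if i = i1 then a * M i1 j else 0) + (if i = i2 then b * M i2 j else 0))"
        using \<open>i1 \<noteq> i2\<close> by (intro sum.cong) (auto simp: \<alpha>_def)
      then show ?thesis
        using \<open>finite I\<close> \<open>i1 \<in> I\<close> \<open>i2 \<in> I\<close> by (simp add: sum.distrib sum.delta')
    qed
    then have "\<forall>i\<in>I. \<alpha> i = 0" using I(2) ab(2) unfolding rows_indep_def by simp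
    then show False using ab(1) \<open>i1 \<in> I\<close> \<open>i2 \<in> I\<close> \<open>i1 \<noteq> i2\<close> by (auto simp: \<alpha>_def)
  qed
  then have "x \<le> 1" if "x \<in> S" for x using that by (auto simp: S_def)
  moreover have "rows_indep M c {i0}"
    using assms(2,3) by (auto simp: rows_indep_def)
  then have "1 \<in> S" using \<open>i0 < r\<close> unfolding S_def by (intro CollectI exI[of _ "{i0}"]) auto
  moreover have "finite S"
    by (rule finite_subset[of _ "card ` Pow {..<r}"]) (auto simp: S_def)
  ultimately show ?thesis unfolding mat_rank_def S_def[symmetric] by (intro Max_eqI) auto
qed

text \<open>Row \<open>i\<close> of the matrix \<open>[I\<^sub>k | X]\<close> is the evaluation of the linearized polynomial with
  coefficients \<open>A i\<close> at \<open>g 0, \<dots>, g (k + l - 1)\<close>; this is what it means for its row space to be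
  spanned by the rows \<open>(\<phi>\<^sup>t (g j))\<^sub>j\<close>, \<open>t < k\<close>, of a Gabidulin generator matrix.\<close>

locale systematic_linpoly = field_endo \<phi> for \<phi> :: "'a::field \<Rightarrow> 'a" +
  fixes k l :: nat and g :: "nat \<Rightarrow> 'a" and A X :: "nat \<Rightarrow> nat \<Rightarrow> 'a"
  assumes indep: "lin_indep_fixed \<phi> (k + l) g"
    and eval_identity: "\<And>i j. i < k \<Longrightarrow> j < k \<Longrightarrow> linpoly \<phi> (A i) k (g j) = (if i = j then 1 else 0)"
    and eval_X: "\<And>i j. i < k \<Longrightarrow> j < l \<Longrightarrow> linpoly \<phi> (A i) k (g (k + j)) = X i j"
begin

lemma X_not_fixed:
  assumes "i < k" "j < l"
  shows "\<phi> (X i j) \<noteq> X i j"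
proof
  assume fixed: "\<phi> (X i j) = X i j"
  let ?h = "g(i := g (k + j) - X i j * g i)"
  have "lin_indep_fixed \<phi> k ?h"
    using assms fixed by (intro lin_indep_fixed_replace[OF indep]) auto
  moreover have "linpoly \<phi> (A i) k (?h t) = 0" if "t < k" for t
    using that assms eval_identity eval_X by (simp add: linpoly_diff_fixed_mult[OF fixed])
  ultimately have "A i t = 0" if "t < k" for t
    using linpoly_vanishing_on_indep_coeffs_eq_0 that by blast
  then have "linpoly \<phi> (A i) k (g i) = 0" by (simp add: linpoly_def)
  then show False using eval_identity[of i i] assms by simp
qed

definition diff_coeff :: "nat \<Rightarrow> nat \<Rightarrow> 'a" where
  "diff_coeff i t = (if 0 < t then \<phi> (A i (t - 1)) else 0) - (if t < k then A i t else 0)"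

lemma linpoly_diff_coeff: "linpoly \<phi> (diff_coeff i) (Suc k) x = \<phi> (linpoly \<phi> (A i) k x) - linpoly \<phi> (A i) k x"
  unfolding diff_coeff_def by (rule frob_linpoly_diff[symmetric])

lemma linpoly_vanishing_top_zero:
  assumes "r k = 0" "\<And>t. t < k \<Longrightarrow> linpoly \<phi> r (Suc k) (g t) = 0"
  shows "linpoly \<phi> r (Suc k) x = 0"
proof -
  have "lin_indep_fixed \<phi> k g" by (rule lin_indep_fixed_mono[OF indep]) simp
  then have "r t = 0" if "t < k" for t
    using linpoly_vanishing_on_indep_coeffs_eq_0[of k g r t] assms that
    by (simp add: linpoly_Suc_top_zero)
  then show ?thesis using assms(1) by (simp add: linpoly_def)
qed

lemma frob_diff_rows_dependent:
  assumes "i1 < k" "i2 < k"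
  shows "\<exists>a b. (a \<noteq> 0 \<or> b \<noteq> 0) \<and>
    (\<forall>j<l. a * (\<phi> (X i1 j) - X i1 j) + b * (\<phi> (X i2 j) - X i2 j) = 0)"
proof -
  have vanish: "linpoly \<phi> (diff_coeff i) (Suc k) (g t) = 0" if "i < k" "t < k" for i t
    using that by (simp add: linpoly_diff_coeff eval_identity one)
  have at_X: "linpoly \<phi> (diff_coeff i) (Suc k) (g (k + j)) = \<phi> (X i j) - X i j"
    if "i < k" "j < l" for i j
    using linpoly_diff_coeff[of i "g (k + j)"] eval_X[OF that] by simp
  define \<beta>1 \<beta>2 where "\<beta>1 = diff_coeff i1 k" and "\<beta>2 = diff_coeff i2 k"
  define r where "r t = \<beta>2 * diff_coeff i1 t - \<beta>1 * diff_coeff i2 t" for t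
  have r_eq: "linpoly \<phi> r (Suc k) x
      = \<beta>2 * linpoly \<phi> (diff_coeff i1) (Suc k) x - \<beta>1 * linpoly \<phi> (diff_coeff i2) (Suc k) x" for x
    unfolding r_def by (rule linpoly_lincomb)
  have "r k = 0" by (simp add: r_def \<beta>1_def \<beta>2_def mult.commute)
  then have r_zero: "linpoly \<phi> r (Suc k) x = 0" for x
    by (rule linpoly_vanishing_top_zero) (simp add: r_eq vanish assms)
  show ?thesis
  proof (cases "\<beta>1 = 0")
    case True
    then have "diff_coeff i1 k = 0" by (simp add: \<beta>1_def)
    then have "linpoly \<phi> (diff_coeff i1) (Suc k) x = 0" for x
      by (rule linpoly_vanishing_top_zero) (simp add: vanish assms)
    then have "\<phi> (X i1 j) - X i1 j = 0" if "j < l" for j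
      using at_X[OF assms(1) that] by simp
    then show ?thesis by (intro exI[of _ 1] exI[of _ 0]) simp
  next
    case False
    have "\<beta>2 * (\<phi> (X i1 j) - X i1 j) + - \<beta>1 * (\<phi> (X i2 j) - X i2 j) = 0" if "j < l" for j
      using r_zero[of "g (k + j)"] r_eq[of "g (k + j)"] at_X[OF assms(1) that] at_X[OF assms(2) that]
      by simp
    then show ?thesis using False by (intro exI[of _ \<beta>2] exI[of _ "- \<beta>1"]) simp
  qed
qed

lemma frob_diff_rank_eq_1:
  assumes "0 < k" "0 < l"
  shows "mat_rank (\<lambda>i j. \<phi> (X i j) - X i j) k l = 1"
proof (rule mat_rank_eq_1I[OF assms])
  show "\<phi> (X 0 0) - X 0 0 \<noteq> 0" using X_not_fixed[OF assms] by simp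
qed (rule frob_diff_rows_dependent)

end

lemma power_card_eq_self:
  fixes x :: "'a::{field,finite}"
  shows "x ^ CARD('a) = x"
proof (cases "x = 0")
  case True
  then show ?thesis by (simp add: finite_UNIV_card_ge_0)
next
  case False
  define U where "U = UNIV - {0::'a}"
  have "(\<Prod>y\<in>U. x * y) = (\<Prod>y\<in>U. y)"
    by (rule prod.reindex_bij_witness[of _ "\<lambda>y. y / x" "\<lambda>y. x * y"]) (use False in \<open>auto simp: U_def\<close>)
  moreover have "(\<Prod>y\<in>U. y) \<noteq> 0" by (simp add: U_def)
  ultimately have "x ^ card U = 1" by (simp add: prod.distrib)
  moreover have "CARD('a) = Suc (card U)"
    using finite_UNIV_card_ge_0[where 'a = 'a] by (simp add: U_def card_Diff_singleton)
  ultimately show ?thesis by simp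
qed

lemma CHAR_eq_prime_of_card:
  assumes "prime p" "CARD('a::{field,finite}) = p ^ n"
  shows "CHAR('a) = p"
proof -
  have "prime CHAR('a)" by (simp add: prime_CHAR_semidom finite_imp_CHAR_pos)
  moreover have "CHAR('a) dvd p ^ n" using CHAR_dvd_CARD[where 'a = 'a] assms(2) by simp
  ultimately show ?thesis
    using assms(1) by (simp add: prime_dvd_power primes_dvd_imp_eq)
qed

lemma funpow_power: "((\<lambda>x. x ^ r) ^^ t) x = x ^ r ^ t"
  for x :: "'a::monoid_mult"
  by (induction t) (simp_all del: power_Suc add: power_Suc2 flip: power_mult)

lemma frobenius_field_endo:
  assumes "prime p" "q = p ^ e" "CARD('a::{field,finite}) = q ^ m"
  shows "field_endo (\<lambda>x::'a. x ^ q ^ s)"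
proof
  have "CHAR('a) = p" using CHAR_eq_prime_of_card assms by (metis power_mult)
  then show "(x + y) ^ q ^ s = x ^ q ^ s + y ^ q ^ s" for x y :: 'a
    using assms(1,2) by (intro freshmans_dream'[where n = "e * s"]) (simp_all add: power_mult)
qed (simp_all add: power_mult_distrib)

lemma frobenius_fixed_iff:
  fixes x :: "'a::monoid_mult"
  assumes "\<And>y::'a. y ^ q ^ m = y" "coprime s m" "0 < s"
  shows "x ^ q ^ s = x \<longleftrightarrow> x ^ q = x"
proof -
  define f where "f y = y ^ q" for y :: 'a
  have f_iter: "(f ^^ t) y = y ^ q ^ t" for t y
    unfolding f_def by (rule funpow_power)
  have fixed_iter: "h y = y \<Longrightarrow> (h ^^ t) y = y" for h :: "'a \<Rightarrow> 'a" and t y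
    by (induction t) auto
  obtain a b where "s * a = m * b + 1"
    using bezout_nat[of s m] \<open>0 < s\<close> \<open>coprime s m\<close> by auto
  have "f ^^ m = id" using assms(1) by (simp add: fun_eq_iff f_iter)
  then have "f ^^ (m * b) = id" by (simp flip: funpow_mult)
  then have "(f ^^ s) ^^ a = f"
    by (simp add: \<open>s * a = m * b + 1\<close> funpow_add funpow_mult)
  show ?thesis
  proof
    assume "x ^ q ^ s = x"
    then have "((f ^^ s) ^^ a) x = x" by (intro fixed_iter[of "f ^^ s"]) (simp add: f_iter)
    with \<open>(f ^^ s) ^^ a = f\<close> show "x ^ q = x" by (simp add: f_def)
  next
    assume "x ^ q = x"
    then show "x ^ q ^ s = x" using fixed_iter[of f x s] by (simp add: f_iter f_def)
  qed
qed

lemma lin_indep_Fq_iff_lin_indep_fixed: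
  assumes "\<And>y::'a::field. y ^ q ^ m = y" "coprime s m" "0 < s"
  shows "lin_indep_Fq q n g \<longleftrightarrow> lin_indep_fixed (\<lambda>x::'a. x ^ q ^ s) n g"
  unfolding lin_indep_Fq_def lin_indep_fixed_def subfield_q_def
  using frobenius_fixed_iff[OF assms] by simp

lemma row_in_row_space:
  assumes "i < r"
  shows "(\<lambda>j. if j < c then M i j else 0) \<in> row_space M r c"
  unfolding row_space_def
  by (intro CollectI exI[of _ "\<lambda>i'. if i' = i then 1 else 0"] ext)
    (use assms in \<open>simp add: if_distrib[of "\<lambda>x. x * _"] sum.delta cong: if_cong\<close>)

lemma row_space_gab_mat_linpoly:
  assumes "v \<in> row_space (gab_mat q s k n g) k n"
  shows "\<exists>a. \<forall>j<n. v j = linpoly (\<lambda>x. x ^ q ^ s) a k (g j)"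
proof -
  obtain a where "v = (\<lambda>j. if j < n then (\<Sum>t<k. a t * gab_mat q s k n g t j) else 0)"
    using assms unfolding row_space_def by blast
  then have "v j = linpoly (\<lambda>x. x ^ q ^ s) a k (g j)" if "j < n" for j
    using that by (simp add: linpoly_def gab_mat_def funpow_power power_mult)
  then show ?thesis by blast
qed

lemma sys_mat_rows_linpoly:
  assumes "row_space (sys_mat k n X) k n = row_space (gab_mat q s k n g) k n"
  obtains A where "\<And>i j. i < k \<Longrightarrow> j < n \<Longrightarrow> sys_mat k n X i j = linpoly (\<lambda>x. x ^ q ^ s) (A i) k (g j)"
proof -
  have "\<exists>a. \<forall>j<n. sys_mat k n X i j = linpoly (\<lambda>x. x ^ q ^ s) a k (g j)" if "i < k" for i
  proof -
    have "(\<lambda>j. if j < n then sys_mat k n X i j else 0) \<in> row_space (gab_mat q s k n g) k n"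
      using row_in_row_space[OF that] assms by blast
    then show ?thesis using row_space_gab_mat_linpoly by fastforce
  qed
  then show ?thesis using that by metis
qed

lemma gabidulin_systematic_in_G_set:
  fixes X :: "nat \<Rightarrow> nat \<Rightarrow> 'a::{field,finite}"
  assumes "prime p" "q = p ^ e" "CARD('a) = q ^ m" "0 < k" "k < n" "X \<in> mats k (n - k)"
    and "0 < s" "coprime s m" "lin_indep_Fq q n g"
    and "row_space (sys_mat k n X) k n = row_space (gab_mat q s k n g) k n"
  shows "X \<in> G_set q k (n - k) s"
proof -
  have pow_qm: "y ^ q ^ m = y" for y :: 'a
    using power_card_eq_self[of y] assms(3) by simp
  obtain A where A: "\<And>i j. i < k \<Longrightarrow> j < n \<Longrightarrow> sys_mat k n X i j = linpoly (\<lambda>x. x ^ q ^ s) (A i) k (g j)"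
    using sys_mat_rows_linpoly[OF assms(10)] by blast
  interpret systematic_linpoly "\<lambda>x::'a. x ^ q ^ s" k "n - k" g A X
  proof (rule systematic_linpoly.intro[OF frobenius_field_endo[OF assms(1-3)]], unfold_locales)
    show "lin_indep_fixed (\<lambda>x::'a. x ^ q ^ s) (k + (n - k)) g"
      using assms(5,9) lin_indep_Fq_iff_lin_indep_fixed[OF pow_qm assms(8,7)] by simp
    show "linpoly (\<lambda>x. x ^ q ^ s) (A i) k (g j) = (if i = j then 1 else 0)" if "i < k" "j < k" for i j
      using A[of i j] that assms(5) by (simp add: sys_mat_def)
    show "linpoly (\<lambda>x. x ^ q ^ s) (A i) k (g (k + j)) = X i j" if "i < k" "j < n - k" for i j
      using A[of i "k + j"] that by (simp add: sys_mat_def)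
  qed
  have "X i j \<notin> subfield_q q" if "i < k" "j < n - k" for i j
    using X_not_fixed[OF that] frobenius_fixed_iff[OF pow_qm assms(8,7)] by (simp add: subfield_q_def)
  moreover have "mat_rank (\<lambda>i j. X i j ^ q ^ s - X i j) k (n - k) = 1"
    using frob_diff_rank_eq_1 assms(4,5) by simp
  ultimately show ?thesis
    using assms(6) by (simp add: G_set_def)
qed

lemma bij_betw_mats_PiE:
  "bij_betw (\<lambda>X. restrict (\<lambda>(i, j). X i j) ({..<k} \<times> {..<l})) (mats k l)
     (PiE ({..<k} \<times> {..<l}) (\<lambda>_. UNIV :: 'a::zero set))"
proof (rule bij_betw_byWitness[where f' = "\<lambda>Y i j. if i < k \<and> j < l then Y (i, j) else 0"])
qed (auto simp: mats_def fun_eq_iff PiE_def extensional_def)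

lemma card_mats: "card (mats k l :: (nat \<Rightarrow> nat \<Rightarrow> 'a::{zero,finite}) set) = CARD('a) ^ (k * l)"
  using bij_betw_same_card[OF bij_betw_mats_PiE] by (simp add: card_PiE card_cartesian_product)

lemma finite_mats: "finite (mats k l :: (nat \<Rightarrow> nat \<Rightarrow> 'a::{zero,finite}) set)"
  by (simp add: bij_betw_finite[OF bij_betw_mats_PiE] finite_PiE)

lemma measure_pmf_of_set_le_sum_cover:
  assumes "finite M" "M \<noteq> {}" "finite S" "M \<inter> B \<subseteq> (\<Union>s\<in>S. A s)"
  shows "measure_pmf.prob (pmf_of_set M) B \<le> (\<Sum>s\<in>S. measure_pmf.prob (pmf_of_set M) (A s))"
proof -
  have "measure_pmf.prob (pmf_of_set M) B = measure_pmf.prob (pmf_of_set M) (B \<inter> M)"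
    using measure_Int_set_pmf[of "pmf_of_set M" B] assms(1,2) by simp
  also have "\<dots> \<le> measure_pmf.prob (pmf_of_set M) (\<Union>s\<in>S. A s)"
    by (rule measure_pmf.finite_measure_mono) (use assms(4) in auto)
  also have "\<dots> \<le> (\<Sum>s\<in>S. measure_pmf.prob (pmf_of_set M) (A s))"
    by (rule measure_pmf.finite_measure_subadditive_finite) (use assms(3) in auto)
  finally show ?thesis .
qed

theorem lemma4p7:
  fixes q m k n :: nat
  assumes "\<exists>p e. prime p \<and> 0 < e \<and> q = p ^ e"
    and "CARD('a::{field,finite}) = q ^ m"
    and "2 \<le> m" and "1 \<le> k" and "k < n"
  shows "measure_pmf.prob (pmf_of_set (mats k (n - k) :: (nat \<Rightarrow> nat \<Rightarrow> 'a) set))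
            {X. is_gen_gabidulin q m k n (row_space (sys_mat k n X) k n)}
         \<le> (\<Sum>s | 0 < s \<and> s < m \<and> coprime s m.
              measure_pmf.prob (pmf_of_set (mats k (n - k) :: (nat \<Rightarrow> nat \<Rightarrow> 'a) set))
                (G_set q k (n - k) s))
       \<and> (\<Sum>s | 0 < s \<and> s < m \<and> coprime s m.
              measure_pmf.prob (pmf_of_set (mats k (n - k) :: (nat \<Rightarrow> nat \<Rightarrow> 'a) set))
                (G_set q k (n - k) s))
         = (\<Sum>s | 0 < s \<and> s < m \<and> coprime s m.
              real (card (G_set q k (n - k) s :: (nat \<Rightarrow> nat \<Rightarrow> 'a) set)) / real q ^ (m * k * (n - k)))"
proof -
  obtain p e where pe: "prime p" "q = p ^ e" using assms(1) by blast
  define M where "M = (mats k (n - k) :: (nat \<Rightarrow> nat \<Rightarrow> 'a) set)"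
  define S where "S = {s. 0 < s \<and> s < m \<and> coprime s m}"
  let ?G = "\<lambda>s. G_set q k (n - k) s :: (nat \<Rightarrow> nat \<Rightarrow> 'a) set"
  let ?Gab = "{X. is_gen_gabidulin q m k n (row_space (sys_mat k n X) k n)}"
  have "(\<lambda>i j. 0) \<in> M" by (simp add: M_def mats_def)
  then have M: "finite M" "M \<noteq> {}" by (auto simp: M_def finite_mats)
  have "M \<inter> ?Gab \<subseteq> (\<Union>s\<in>S. ?G s)"
  proof clarify
    fix X assume "X \<in> M" "is_gen_gabidulin q m k n (row_space (sys_mat k n X) k n)"
    then obtain s g where "0 < s" "s < m" "coprime s m" "lin_indep_Fq q n g"
      "row_space (sys_mat k n X) k n = row_space (gab_mat q s k n g) k n"
      unfolding is_gen_gabidulin_def by blast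
    then have "X \<in> ?G s"
      using gabidulin_systematic_in_G_set[OF pe assms(2) _ assms(5)] assms(4) \<open>X \<in> M\<close>
      by (simp add: M_def)
    then show "X \<in> (\<Union>s\<in>S. ?G s)" using \<open>0 < s\<close> \<open>s < m\<close> \<open>coprime s m\<close> by (auto simp: S_def)
  qed
  then have bound: "measure_pmf.prob (pmf_of_set M) ?Gab \<le> (\<Sum>s\<in>S. measure_pmf.prob (pmf_of_set M) (?G s))"
    by (intro measure_pmf_of_set_le_sum_cover M) (auto simp: S_def)
  have "measure_pmf.prob (pmf_of_set M) (?G s) = real (card (?G s)) / real q ^ (m * k * (n - k))" for s
  proof -
    have "?G s \<subseteq> M" by (auto simp: G_set_def M_def)
    then show ?thesis
      using measure_pmf_of_set[OF M(2,1)] card_mats[where 'a = 'a] assms(2)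
      by (simp add: M_def Int_absorb1 power_mult mult.assoc)
  qed
  with bound show ?thesis unfolding M_def S_def by simp
qed

end
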